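(* Prioritized planning is suboptimal for the flowtime objective in general for the class of P-solvable MAPF instances: there exists a P-solvable MAPF instance such that, for every priority ordering $\prec$, every solution consistent with $\prec$ has flowtime strictly greater than the minimum flowtime over all solutions of the instance.
   Context: A MAPF instance consists of a connected undirected graph $G=(V,E)$ and $M$ agents $a_1,\dots,a_M$; agent $a_i$ has a start vertex $s_i$ and a target vertex $t_i$, and start vertices are pairwise distinct, as are target vertices. Time is discrete; at each time step every agent either moves to an adjacent vertex or waits. A path for $a_i$ is a sequence $\pi_i=\langle \pi_i(0),\pi_i(1),\dots\rangle$ with $\pi_i(0)=s_i$, consecutive vertices equal or adjacent, and $\pi_i(t)=t_i$ for all $t\ge T_i$, where the arrival time $T_i$ is the least such time. Two agents collide if they occupy the same vertex at the same time, or traverse the same edge in opposite directions at the same time step. A solution is a collision-free set of paths, one per agent; its flowtime is $\sum_{i=1}^M T_i$. A priority ordering is a strict partial order $\prec$ on $\{1,\dots,M\}$ ($a_i$ has higher priority than $a_j$ iff $i\prec j$). A solution $\{\pi_i\}$ is consistent with $\prec$ if for every $i$ the arrival time of $\pi_i$ equals the minimum arrival time over all paths for $a_i$ that do not collide with any $\pi_k$ with $k\prec i$ (higher priority agents never wait for lower priority agents). A MAPF instance is P-solvable iff it has a solution consistent with some priority ordering. *)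

theory Defs
  imports Main
begin

definition mapf_instance ::
  "'v set \<Rightarrow> ('v \<Rightarrow> 'v \<Rightarrow> bool) \<Rightarrow> nat \<Rightarrow> (nat \<Rightarrow> 'v) \<Rightarrow> (nat \<Rightarrow> 'v) \<Rightarrow> bool" where
  "mapf_instance V E M s t \<longleftrightarrow>
     finite V \<and>
     (\<forall>u w. E u w \<longrightarrow> u \<in> V \<and> w \<in> V) \<and>
     (\<forall>u w. E u w \<longrightarrow> E w u) \<and>
     (\<forall>u. \<not> E u u) \<and>
     (\<forall>u\<in>V. \<forall>w\<in>V. E\<^sup>*\<^sup>* u w) \<and>
     (\<forall>i<M. s i \<in> V \<and> t i \<in> V) \<and>
     inj_on s {..<M} \<and> inj_on t {..<M}"

definition is_path :: "'v set \<Rightarrow> ('v \<Rightarrow> 'v \<Rightarrow> bool) \<Rightarrow> 'v \<Rightarrow> 'v \<Rightarrow> (nat \<Rightarrow> 'v) \<Rightarrow> bool" where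
  "is_path V E a b \<pi> \<longleftrightarrow>
     \<pi> 0 = a \<and> (\<forall>n. \<pi> n \<in> V) \<and>
     (\<forall>n. \<pi> (Suc n) = \<pi> n \<or> E (\<pi> n) (\<pi> (Suc n))) \<and>
     (\<exists>T. \<forall>n\<ge>T. \<pi> n = b)"

definition arrival :: "'v \<Rightarrow> (nat \<Rightarrow> 'v) \<Rightarrow> nat" where
  "arrival b \<pi> = (LEAST T. \<forall>n\<ge>T. \<pi> n = b)"

definition collide :: "(nat \<Rightarrow> 'v) \<Rightarrow> (nat \<Rightarrow> 'v) \<Rightarrow> bool" where
  "collide p q \<longleftrightarrow>
     (\<exists>n. p n = q n \<or>
          (p n \<noteq> p (Suc n) \<and> p n = q (Suc n) \<and> p (Suc n) = q n))"

definition is_solution ::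
  "'v set \<Rightarrow> ('v \<Rightarrow> 'v \<Rightarrow> bool) \<Rightarrow> nat \<Rightarrow> (nat \<Rightarrow> 'v) \<Rightarrow> (nat \<Rightarrow> 'v) \<Rightarrow> (nat \<Rightarrow> nat \<Rightarrow> 'v) \<Rightarrow> bool" where
  "is_solution V E M s t sol \<longleftrightarrow>
     (\<forall>i<M. is_path V E (s i) (t i) (sol i)) \<and>
     (\<forall>i<M. \<forall>j<M. i \<noteq> j \<longrightarrow> \<not> collide (sol i) (sol j))"

definition flowtime :: "nat \<Rightarrow> (nat \<Rightarrow> 'v) \<Rightarrow> (nat \<Rightarrow> nat \<Rightarrow> 'v) \<Rightarrow> nat" where
  "flowtime M t sol = (\<Sum>i<M. arrival (t i) (sol i))"

definition min_flowtime ::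
  "'v set \<Rightarrow> ('v \<Rightarrow> 'v \<Rightarrow> bool) \<Rightarrow> nat \<Rightarrow> (nat \<Rightarrow> 'v) \<Rightarrow> (nat \<Rightarrow> 'v) \<Rightarrow> nat" where
  "min_flowtime V E M s t =
     (LEAST f. \<exists>sol. is_solution V E M s t sol \<and> flowtime M t sol = f)"

text \<open>A priority ordering: strict partial order on the agents {0..<M};
  prec k i means agent k has higher priority than agent i.\<close>

definition priority_ordering :: "nat \<Rightarrow> (nat \<Rightarrow> nat \<Rightarrow> bool) \<Rightarrow> bool" where
  "priority_ordering M prec \<longleftrightarrow>
     (\<forall>i j. prec i j \<longrightarrow> i < M \<and> j < M) \<and>
     (\<forall>i. \<not> prec i i) \<and>
     (\<forall>i j k. prec i j \<longrightarrow> prec j k \<longrightarrow> prec i k)"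

definition consistent ::
  "'v set \<Rightarrow> ('v \<Rightarrow> 'v \<Rightarrow> bool) \<Rightarrow> nat \<Rightarrow> (nat \<Rightarrow> 'v) \<Rightarrow> (nat \<Rightarrow> 'v) \<Rightarrow>
   (nat \<Rightarrow> nat \<Rightarrow> bool) \<Rightarrow> (nat \<Rightarrow> nat \<Rightarrow> 'v) \<Rightarrow> bool" where
  "consistent V E M s t prec sol \<longleftrightarrow>
     is_solution V E M s t sol \<and>
     (\<forall>i<M. arrival (t i) (sol i) =
        (LEAST T. \<exists>\<pi>. is_path V E (s i) (t i) \<pi> \<and>
                       (\<forall>k<M. prec k i \<longrightarrow> \<not> collide \<pi> (sol k)) \<and>
                       arrival (t i) \<pi> = T))"

definition P_solvable ::
  "'v set \<Rightarrow> ('v \<Rightarrow> 'v \<Rightarrow> bool) \<Rightarrow> nat \<Rightarrow> (nat \<Rightarrow> 'v) \<Rightarrow> (nat \<Rightarrow> 'v) \<Rightarrow> bool" where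
  "P_solvable V E M s t \<longleftrightarrow>
     (\<exists>prec sol. priority_ordering M prec \<and> consistent V E M s t prec sol)"

end

theory Submission
  imports Defs
begin

text \<open>
  The counterexample lives on the tree with edges 0-1, 0-3, 0-4, 1-2, 2-5, 2-6. Agent 0 goes
  from 1 to 0, agent 1 from the leaf 3 along 3, 0, 1, 2 to 5; the leaves 4 and 6 are pockets in
  which agent 0 can step aside. If agent 0 does not have to respect agent 1, its shortest path
  parks it at 0 from time 1 on, which seals agent 1 in at 3: no consistent solution exists. If
  agent 1 has priority, its only route of length 4 is 3, 0, 1, 2, 5; agent 0 has to flee before
  it into the pocket 6 and reaches 0 at time 6 at the earliest, so the flowtime is at least
  6 + 4 = 10. Without priorities agent 0 dodges into 4 while agent 1 waits one step, which
  costs 3 + 5 = 8.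
\<close>

lemma is_path_start: "is_path V E a b \<pi> \<Longrightarrow> \<pi> 0 = a"
  unfolding is_path_def by blast

lemma is_path_step: "is_path V E a b \<pi> \<Longrightarrow> \<pi> (Suc n) = \<pi> n \<or> E (\<pi> n) (\<pi> (Suc n))"
  unfolding is_path_def by blast

lemma is_path_at_target:
  assumes "is_path V E a b \<pi>" and "arrival b \<pi> \<le> n"
  shows "\<pi> n = b"
proof -
  from assms(1) have "\<exists>T. \<forall>n\<ge>T. \<pi> n = b"
    unfolding is_path_def by blast
  then have "\<forall>n\<ge>arrival b \<pi>. \<pi> n = b"
    unfolding arrival_def by (rule LeastI_ex)
  with assms(2) show ?thesis by blast
qed

lemma arrival_gt: "is_path V E a b \<pi> \<Longrightarrow> \<pi> n \<noteq> b \<Longrightarrow> n < arrival b \<pi>"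
  using is_path_at_target by (metis not_le)

lemma collide_sym: "collide p q \<longleftrightarrow> collide q p"
  unfolding collide_def by (metis (no_types))

lemma not_collide_step:
  assumes "\<not> collide p q"
  shows "p (Suc n) \<noteq> q (Suc n)" and "p n = q (Suc n) \<Longrightarrow> p (Suc n) \<noteq> q n"
  using assms unfolding collide_def by (blast, metis)

definition moves :: "('v \<Rightarrow> 'v \<Rightarrow> bool) \<Rightarrow> 'v set \<Rightarrow> 'v set" where
  "moves E A = {w. \<exists>u\<in>A. u = w \<or> E u w}"

definition safe_moves :: "('v \<Rightarrow> 'v \<Rightarrow> bool) \<Rightarrow> (nat \<Rightarrow> 'v) \<Rightarrow> nat \<Rightarrow> 'v set \<Rightarrow> 'v set" where
  "safe_moves E q n A =
     {w. \<exists>u\<in>A. (u = w \<or> E u w) \<and> w \<noteq> q (Suc n) \<and> \<not> (u = q (Suc n) \<and> w = q n)}"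

lemma is_path_Suc_in_moves:
  "is_path V E a b \<pi> \<Longrightarrow> \<pi> n \<in> A \<Longrightarrow> \<pi> (Suc n) \<in> moves E A"
  unfolding moves_def using is_path_step[of V E a b \<pi> n] by auto

lemma is_path_in_moves_of_Suc:
  "symp E \<Longrightarrow> is_path V E a b \<pi> \<Longrightarrow> \<pi> (Suc n) \<in> A \<Longrightarrow> \<pi> n \<in> moves E A"
  unfolding moves_def using is_path_step[of V E a b \<pi> n] by (auto dest: sympD)

lemma is_path_Suc_in_safe_moves:
  assumes "is_path V E a b \<pi>" and "\<not> collide \<pi> q" and "\<pi> n \<in> A"
  shows "\<pi> (Suc n) \<in> safe_moves E q n A"
  unfolding safe_moves_def
  using assms(3) is_path_step[OF assms(1), of n] not_collide_step[OF assms(2), of n] by auto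

lemma is_path_trapped:
  assumes \<pi>: "is_path V E a b \<pi>" and no_collision: "\<not> collide \<pi> q"
    and "\<pi> m = u" and dead_end: "\<And>w. E u w \<Longrightarrow> w = v" and parked: "\<And>n. m < n \<Longrightarrow> q n = v"
    and "m \<le> n"
  shows "\<pi> n = u"
  using \<open>m \<le> n\<close>
proof (induction n rule: dec_induct)
  case base
  show ?case by fact
next
  case (step k)
  have "\<pi> (Suc k) \<noteq> v"
    using not_collide_step(1)[OF no_collision, of k] parked[of "Suc k"] \<open>m \<le> k\<close> by simp
  then show ?case
    using is_path_step[OF \<pi>, of k] dead_end step.IH by auto
qed

lemma is_solution_two:
  "is_solution V E 2 s t sol \<longleftrightarrow>
     is_path V E (s 0) (t 0) (sol 0) \<and> is_path V E (s 1) (t 1) (sol 1) \<and> \<not> collide (sol 0) (sol 1)"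
  unfolding is_solution_def less_2_cases_iff by (auto simp: collide_sym)

lemma flowtime_two: "flowtime 2 t sol = arrival (t 0) (sol 0) + arrival (t 1) (sol 1)"
  unfolding flowtime_def by (simp add: numeral_2_eq_2)

lemma min_flowtime_le: "is_solution V E M s t sol \<Longrightarrow> min_flowtime V E M s t \<le> flowtime M t sol"
  unfolding min_flowtime_def by (auto intro: Least_le)

lemma consistent_arrival_le:
  assumes "consistent V E M s t prec sol" and "i < M" and "is_path V E (s i) (t i) \<pi>"
    and "\<forall>k<M. prec k i \<longrightarrow> \<not> collide \<pi> (sol k)"
  shows "arrival (t i) (sol i) \<le> arrival (t i) \<pi>"
  using assms unfolding consistent_def by (auto intro: Least_le)

lemma consistentI:
  assumes sol: "is_solution V E M s t sol" and irrefl: "\<And>i. \<not> prec i i"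
    and optimal: "\<And>i \<pi>. i < M \<Longrightarrow> is_path V E (s i) (t i) \<pi> \<Longrightarrow>
        \<forall>k<M. prec k i \<longrightarrow> \<not> collide \<pi> (sol k) \<Longrightarrow> arrival (t i) (sol i) \<le> arrival (t i) \<pi>"
  shows "consistent V E M s t prec sol"
  unfolding consistent_def
proof (intro conjI allI impI sol)
  fix i assume "i < M"
  have "\<forall>k<M. prec k i \<longrightarrow> \<not> collide (sol i) (sol k)"
    using sol irrefl \<open>i < M\<close> unfolding is_solution_def by metis
  moreover have "is_path V E (s i) (t i) (sol i)"
    using sol \<open>i < M\<close> unfolding is_solution_def by blast
  ultimately show "arrival (t i) (sol i) =
      (LEAST T. \<exists>\<pi>. is_path V E (s i) (t i) \<pi> \<and> (\<forall>k<M. prec k i \<longrightarrow> \<not> collide \<pi> (sol k)) \<and>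
                     arrival (t i) \<pi> = T)"
    using optimal[OF \<open>i < M\<close>] by (intro Least_equality[symmetric]) auto
qed

lemma rtranclp_via_hub:
  assumes "symp E" and "\<forall>u\<in>V. E\<^sup>*\<^sup>* u c" and "u \<in> V" and "w \<in> V"
  shows "E\<^sup>*\<^sup>* u w"
  using assms sympD[OF symp_rtranclp[OF assms(1)]] by (meson rtranclp_trans)

definition walk :: "'v list \<Rightarrow> nat \<Rightarrow> 'v" where
  "walk xs n = (if n < length xs then xs ! n else last xs)"

lemma walk_beyond:
  assumes "xs \<noteq> []" and "length xs \<le> Suc n"
  shows "walk xs n = last xs"
proof -
  have "n < length xs \<Longrightarrow> n = length xs - 1"
    using assms(2) by arith
  then show ?thesis
    unfolding walk_def using assms(1) by (auto simp: last_conv_nth)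
qed

lemma walk_in_set: "xs \<noteq> [] \<Longrightarrow> walk xs n \<in> set xs"
  unfolding walk_def by auto

lemma is_path_walk:
  assumes "xs \<noteq> []" and "set xs \<subseteq> V" and steps: "successively (\<lambda>u w. u = w \<or> E u w) xs"
  shows "is_path V E (hd xs) (last xs) (walk xs)"
  unfolding is_path_def
proof (intro conjI allI)
  show "walk xs 0 = hd xs"
    using \<open>xs \<noteq> []\<close> by (simp add: walk_def hd_conv_nth)
  fix n
  show "walk xs n \<in> V"
    using walk_in_set[OF \<open>xs \<noteq> []\<close>] \<open>set xs \<subseteq> V\<close> by blast
  show "walk xs (Suc n) = walk xs n \<or> E (walk xs n) (walk xs (Suc n))"
  proof (cases "Suc n < length xs")
    case True
    then have "n < length xs" by simp
    with True show ?thesis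
      using successively_nth[OF steps True] by (auto simp: walk_def)
  next
    case False
    then show ?thesis
      using walk_beyond[OF \<open>xs \<noteq> []\<close>, of n] walk_beyond[OF \<open>xs \<noteq> []\<close>, of "Suc n"] by simp
  qed
next
  have "\<forall>n\<ge>length xs. walk xs n = last xs"
    using walk_beyond[OF \<open>xs \<noteq> []\<close>] by simp
  then show "\<exists>T. \<forall>n\<ge>T. walk xs n = last xs" ..
qed

lemma arrival_walk:
  assumes "a \<noteq> b"
  shows "arrival b (walk (xs @ [a, b])) = Suc (length xs)"
  unfolding arrival_def
proof (rule Least_equality)
  show "\<forall>n\<ge>Suc (length xs). walk (xs @ [a, b]) n = b"
    using walk_beyond[of "xs @ [a, b]"] by auto
  fix T assume "\<forall>n\<ge>T. walk (xs @ [a, b]) n = b"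
  moreover have "walk (xs @ [a, b]) (length xs) = a"
    by (simp add: walk_def nth_append)
  ultimately have "\<not> T \<le> length xs"
    using assms by auto
  then show "Suc (length xs) \<le> T"
    by simp
qed

lemma not_collide_walkI:
  assumes "xs \<noteq> []" and "ys \<noteq> []" and "last xs \<noteq> last ys"
    and "\<forall>n < max (length xs) (length ys).
           walk xs n \<noteq> walk ys n \<and> \<not> (walk xs n = walk ys (Suc n) \<and> walk xs (Suc n) = walk ys n)"
  shows "\<not> collide (walk xs) (walk ys)"
  unfolding collide_def
proof
  assume "\<exists>n. walk xs n = walk ys n \<or> walk xs n \<noteq> walk xs (Suc n) \<and>
               walk xs n = walk ys (Suc n) \<and> walk xs (Suc n) = walk ys n"
  then obtain n where n: "walk xs n = walk ys n \<or>
      walk xs n = walk ys (Suc n) \<and> walk xs (Suc n) = walk ys n" by blast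
  show False
  proof (cases "n < max (length xs) (length ys)")
    case True
    then show False using assms(4) n by blast
  next
    case False
    then show False using assms(1-3) n by (simp add: walk_beyond)
  qed
qed

subsection \<open>The counterexample\<close>

definition ex_vertices :: "nat set" where
  "ex_vertices = {0..6}"

definition ex_edge :: "nat \<Rightarrow> nat \<Rightarrow> bool" where
  "ex_edge u w \<longleftrightarrow> {u, w} \<in> {{0, 1}, {0, 3}, {0, 4}, {1, 2}, {2, 5}, {2, 6}}"

definition ex_start :: "nat \<Rightarrow> nat" where
  "ex_start i = (if i = 0 then 1 else 3)"

definition ex_target :: "nat \<Rightarrow> nat" where
  "ex_target i = (if i = 0 then 0 else 5)"

definition agent1_direct :: "nat \<Rightarrow> nat" where
  "agent1_direct = walk [3, 0, 1, 2, 5]"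

lemmas ex_simps = ex_vertices_def ex_edge_def doubleton_eq_iff

lemma symp_ex_edge: "symp ex_edge"
  by (auto intro: sympI simp: ex_edge_def insert_commute)

lemma ex_mapf_instance: "mapf_instance ex_vertices ex_edge 2 ex_start ex_target"
proof -
  have edges: "ex_edge 1 0" "ex_edge 2 1" "ex_edge 3 0" "ex_edge 4 0" "ex_edge 5 2" "ex_edge 6 2"
    by (simp_all add: ex_simps)
  have "ex_edge\<^sup>*\<^sup>* 1 0" "ex_edge\<^sup>*\<^sup>* 3 0" "ex_edge\<^sup>*\<^sup>* 4 0"
    using edges by (simp_all add: r_into_rtranclp)
  moreover from this(1) have "ex_edge\<^sup>*\<^sup>* 2 0"
    using edges(2) by (rule converse_rtranclp_into_rtranclp[rotated])
  moreover from this have "ex_edge\<^sup>*\<^sup>* 5 0" "ex_edge\<^sup>*\<^sup>* 6 0"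
    using edges(5,6) by (simp_all add: converse_rtranclp_into_rtranclp)
  moreover have "ex_vertices = {0, 1, 2, 3, 4, 5, 6}"
    by (auto simp: ex_vertices_def)
  ultimately have hub: "\<forall>u\<in>ex_vertices. ex_edge\<^sup>*\<^sup>* u 0"
    by (metis insert_iff empty_iff rtranclp.rtrancl_refl)
  show ?thesis
    unfolding mapf_instance_def
  proof (intro conjI)
    show "finite ex_vertices"
      by (simp add: ex_vertices_def)
    show "\<forall>u w. ex_edge u w \<longrightarrow> u \<in> ex_vertices \<and> w \<in> ex_vertices"
      by (auto simp: ex_simps)
    show "\<forall>u w. ex_edge u w \<longrightarrow> ex_edge w u"
      using symp_ex_edge by (blast dest: sympD)
    show "\<forall>u. \<not> ex_edge u u"
      by (auto simp: ex_simps)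
    show "\<forall>u\<in>ex_vertices. \<forall>w\<in>ex_vertices. ex_edge\<^sup>*\<^sup>* u w"
      using rtranclp_via_hub[OF symp_ex_edge hub] by blast
    show "\<forall>i<2. ex_start i \<in> ex_vertices \<and> ex_target i \<in> ex_vertices"
      by (simp add: ex_start_def ex_target_def ex_vertices_def)
    show "inj_on ex_start {..<2}" and "inj_on ex_target {..<2}"
      by (auto simp: inj_on_def ex_start_def ex_target_def)
  qed
qed

lemma is_path_agent1_direct: "is_path ex_vertices ex_edge 3 5 agent1_direct"
  unfolding agent1_direct_def using is_path_walk[of "[3, 0, 1, 2, 5 :: nat]"] by (simp add: ex_simps)

lemma arrival_agent1_direct: "arrival 5 agent1_direct = 4"
  unfolding agent1_direct_def using arrival_walk[of 2 5 "[3, 0, 1 :: nat]"] by simp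

text \<open>The vertices reachable from 3 within k steps and those from which 5 is reachable in the
  remaining 4 - k steps meet in a single vertex at every time k.\<close>

lemma agent1_forced:
  assumes \<pi>: "is_path ex_vertices ex_edge 3 5 \<pi>" and "arrival 5 \<pi> \<le> 4"
  shows "\<pi> = agent1_direct"
proof
  have at_target: "\<pi> n = 5" if "4 \<le> n" for n
    using is_path_at_target[OF \<pi>] that \<open>arrival 5 \<pi> \<le> 4\<close> by simp
  note fwd = is_path_Suc_in_moves[OF \<pi>] and bwd = is_path_in_moves_of_Suc[OF symp_ex_edge \<pi>]
  \<comment> \<open>the simplifier turns \<open>Suc 1\<close> into \<open>Suc (Suc 0)\<close>, not into \<open>2\<close>\<close>
  note simps = moves_def ex_simps numeral_2_eq_2[symmetric]
  have "\<pi> 1 \<in> {0, 3}"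
    using fwd[of 0 "{3}"] is_path_start[OF \<pi>] by (auto simp: simps)
  have "\<pi> 3 \<in> {2, 5}"
    using bwd[of 3 "{5}"] at_target[of 4] by (auto simp: simps)
  have "\<pi> 2 \<in> {0, 1, 3, 4}" and "\<pi> 2 \<in> {1, 2, 5, 6}"
    using fwd[of 1 "{0, 3}"] bwd[of 2 "{2, 5}"] \<open>\<pi> 1 \<in> {0, 3}\<close> \<open>\<pi> 3 \<in> {2, 5}\<close>
    by (auto simp: simps)
  then have "\<pi> 2 = 1"
    by auto
  then have "\<pi> 1 \<in> moves ex_edge {1}" and "\<pi> 3 \<in> moves ex_edge {1}"
    using bwd[of 1 "{1}"] fwd[of 2 "{1}"] by (simp_all add: numeral_2_eq_2[symmetric])
  then have "\<pi> 1 = 0" and "\<pi> 3 = 2"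
    using \<open>\<pi> 1 \<in> {0, 3}\<close> \<open>\<pi> 3 \<in> {2, 5}\<close> by (auto simp: simps)
  fix n
  show "\<pi> n = agent1_direct n"
  proof (cases "n < 4")
    case True
    then have "n = 0 \<or> n = 1 \<or> n = 2 \<or> n = 3"
      by auto
    then show ?thesis
      using is_path_start[OF \<pi>] \<open>\<pi> 1 = 0\<close> \<open>\<pi> 2 = 1\<close> \<open>\<pi> 3 = 2\<close>
      by (auto simp: agent1_direct_def walk_def)
  next
    case False
    then show ?thesis
      using at_target[of n] walk_beyond[of "[3, 0, 1, 2, 5 :: nat]" n] by (simp add: agent1_direct_def)
  qed
qed

lemma agent1_arrival_ge: "is_path ex_vertices ex_edge 3 5 \<pi> \<Longrightarrow> 4 \<le> arrival 5 \<pi>"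
  using agent1_forced arrival_agent1_direct by fastforce

text \<open>Running ahead of agent 1, agent 0 is chased from 1 into the pocket 6 and back.\<close>

lemma agent0_arrival_behind_agent1:
  assumes \<pi>: "is_path ex_vertices ex_edge 1 0 \<pi>" and "\<not> collide \<pi> agent1_direct"
  shows "6 \<le> arrival 0 \<pi>"
proof -
  note step = is_path_Suc_in_safe_moves[OF \<pi> \<open>\<not> collide \<pi> agent1_direct\<close>]
  note simps = safe_moves_def ex_simps agent1_direct_def walk_def numeral_2_eq_2[symmetric]
  have "\<pi> 1 \<in> {1, 2}"
    using step[of 0 "{1}"] is_path_start[OF \<pi>] by (auto simp: simps)
  then have "\<pi> 2 \<in> {2, 5, 6}"
    using step[of 1 "{1, 2}"] by (auto simp: simps)
  then have "\<pi> 3 \<in> {5, 6}"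
    using step[of 2 "{2, 5, 6}"] by (auto simp: simps)
  then have "\<pi> 4 \<in> {2, 6}"
    using step[of 3 "{5, 6}"] by (auto simp: simps)
  then have "\<pi> 5 \<in> {1, 2, 6}"
    using step[of 4 "{2, 6}"] by (auto simp: simps)
  then show ?thesis
    using arrival_gt[OF \<pi>, of 5] by auto
qed

lemma agent1_sealed_in:
  assumes \<pi>0: "is_path ex_vertices ex_edge 1 0 \<pi>0" and "arrival 0 \<pi>0 \<le> 1"
    and \<pi>1: "is_path ex_vertices ex_edge 3 5 \<pi>1" and "\<not> collide \<pi>1 \<pi>0"
  shows False
proof -
  have "\<pi>1 n = 3" for n
  proof (rule is_path_trapped[OF \<pi>1 \<open>\<not> collide \<pi>1 \<pi>0\<close>])
    show "\<pi>1 0 = 3" using is_path_start[OF \<pi>1] .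
    show "\<And>w. ex_edge 3 w \<Longrightarrow> w = 0" by (auto simp: ex_simps)
    show "\<And>n. 0 < n \<Longrightarrow> \<pi>0 n = 0"
      using is_path_at_target[OF \<pi>0] \<open>arrival 0 \<pi>0 \<le> 1\<close> by simp
  qed simp
  then show False
    using is_path_at_target[OF \<pi>1, of "arrival 5 \<pi>1"] by simp
qed

lemma ex_min_flowtime_le: "min_flowtime ex_vertices ex_edge 2 ex_start ex_target \<le> 8"
proof -
  define sol :: "nat \<Rightarrow> nat \<Rightarrow> nat" where
    "sol i = (if i = 0 then walk [1, 0, 4, 0] else walk [3, 3, 0, 1, 2, 5])" for i
  have "is_solution ex_vertices ex_edge 2 ex_start ex_target sol"
    unfolding is_solution_two sol_def ex_start_def ex_target_def
    using is_path_walk[of "[1, 0, 4, 0 :: nat]"] is_path_walk[of "[3, 3, 0, 1, 2, 5 :: nat]"]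
      not_collide_walkI[of "[1, 0, 4, 0 :: nat]" "[3, 3, 0, 1, 2, 5]"]
    by (simp add: ex_simps walk_def All_less_Suc numeral_eq_Suc)
  moreover have "flowtime 2 ex_target sol = 8"
    using arrival_walk[of 4 0 "[1, 0 :: nat]"] arrival_walk[of 2 5 "[3, 3, 0, 1 :: nat]"]
    by (simp add: flowtime_two sol_def ex_target_def)
  ultimately show ?thesis
    using min_flowtime_le by metis
qed

lemma ex_P_solvable: "P_solvable ex_vertices ex_edge 2 ex_start ex_target"
proof -
  define prec :: "nat \<Rightarrow> nat \<Rightarrow> bool" where "prec k i \<longleftrightarrow> k = 1 \<and> i = 0" for k i
  define sol :: "nat \<Rightarrow> nat \<Rightarrow> nat" where
    "sol i = (if i = 0 then walk [1, 2, 6, 6, 2, 1, 0] else agent1_direct)" for i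
  have "is_solution ex_vertices ex_edge 2 ex_start ex_target sol"
    unfolding is_solution_two sol_def ex_start_def ex_target_def agent1_direct_def
    using is_path_walk[of "[1, 2, 6, 6, 2, 1, 0 :: nat]"] is_path_agent1_direct
      not_collide_walkI[of "[1, 2, 6, 6, 2, 1, 0 :: nat]" "[3, 0, 1, 2, 5]"]
    by (simp add: ex_simps agent1_direct_def walk_def All_less_Suc numeral_eq_Suc)
  moreover have "arrival 0 (sol 0) = 6"
    using arrival_walk[of 1 0 "[1, 2, 6, 6, 2 :: nat]"] by (simp add: sol_def)
  ultimately have "consistent ex_vertices ex_edge 2 ex_start ex_target prec sol"
    using agent0_arrival_behind_agent1 agent1_arrival_ge arrival_agent1_direct
    by (intro consistentI) (auto simp: prec_def less_2_cases_iff ex_start_def ex_target_def sol_def)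
  moreover have "priority_ordering 2 prec"
    by (auto simp: priority_ordering_def prec_def)
  ultimately show ?thesis
    unfolding P_solvable_def by blast
qed

lemma ex_consistent_flowtime_ge:
  assumes prec: "priority_ordering 2 prec"
    and cons: "consistent ex_vertices ex_edge 2 ex_start ex_target prec sol"
  shows "10 \<le> flowtime 2 ex_target sol"
proof -
  have "is_solution ex_vertices ex_edge 2 ex_start ex_target sol"
    using cons by (simp add: consistent_def)
  then have \<pi>0: "is_path ex_vertices ex_edge 1 0 (sol 0)"
    and \<pi>1: "is_path ex_vertices ex_edge 3 5 (sol 1)" and "\<not> collide (sol 0) (sol 1)"
    by (simp_all add: is_solution_two ex_start_def ex_target_def)
  have irrefl: "\<not> prec i i" for i
    using prec by (simp add: priority_ordering_def)
  have "prec 1 0"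
  proof (rule ccontr)
    assume "\<not> prec 1 0"
    then have "arrival 0 (sol 0) \<le> arrival 0 (walk [1, 0 :: nat])"
      using consistent_arrival_le[OF cons, of 0 "walk [1, 0 :: nat]"] is_path_walk[of "[1, 0 :: nat]"] irrefl
      by (simp add: ex_simps ex_start_def ex_target_def less_2_cases_iff)
    also have "\<dots> = 1"
      using arrival_walk[of 1 0 "[] :: nat list"] by simp
    finally show False
      using agent1_sealed_in[OF \<pi>0 _ \<pi>1] \<open>\<not> collide (sol 0) (sol 1)\<close> collide_sym by blast
  qed
  then have "\<not> prec 0 1"
    using prec irrefl unfolding priority_ordering_def by blast
  then have "arrival 5 (sol 1) \<le> 4"
    using consistent_arrival_le[OF cons, of 1 agent1_direct] is_path_agent1_direct irrefl
    by (simp add: arrival_agent1_direct ex_start_def ex_target_def less_2_cases_iff)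
  then have "sol 1 = agent1_direct"
    using agent1_forced[OF \<pi>1] by blast
  then have "6 \<le> arrival 0 (sol 0)" and "arrival 5 (sol 1) = 4"
    using agent0_arrival_behind_agent1[OF \<pi>0] \<open>\<not> collide (sol 0) (sol 1)\<close> arrival_agent1_direct
    by simp_all
  then show ?thesis
    by (simp add: flowtime_two ex_target_def)
qed

theorem theorem4:
  shows "\<exists>(V :: nat set) E M s t.
     mapf_instance V E M s t \<and> P_solvable V E M s t \<and>
     (\<forall>prec sol. priority_ordering M prec \<longrightarrow> consistent V E M s t prec sol \<longrightarrow>
        flowtime M t sol > min_flowtime V E M s t)"
proof (intro exI conjI allI impI)
  show "mapf_instance ex_vertices ex_edge 2 ex_start ex_target"
    by (rule ex_mapf_instance)
  show "P_solvable ex_vertices ex_edge 2 ex_start ex_target"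
    by (rule ex_P_solvable)
  fix prec sol
  assume "priority_ordering 2 prec" and "consistent ex_vertices ex_edge 2 ex_start ex_target prec sol"
  then show "min_flowtime ex_vertices ex_edge 2 ex_start ex_target < flowtime 2 ex_target sol"
    using ex_consistent_flowtime_ge ex_min_flowtime_le by fastforce
qed

end
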